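(* Let $L>0$, let $P\in H^2(0,L)$ be real-valued with $P(x)\ge P^0>0$ on $[0,L]$, and let $\theta_1,\dots,\theta_4\in\mathbb R$. Suppose there are constants $a,b>0$ with $(a+b-1)^2<4ab$ such that $\theta_1=\theta_3/b-a$, $\theta_2=\theta_4/b$, and suppose $\theta_1,\theta_3<0$, $\theta_2,\theta_4>0$. Let $\mathcal H=\{(w,v,\xi,\psi): w\in H^2(0,L),\ v\in H^1(0,L),\ \xi=v(L),\ \psi=v(0)\}$, $F[w,v]=\theta_1v(0)+\theta_2v'(0)+\theta_3w(0)+\theta_4w'(0)$, and $A(w,v,\xi,\psi)=(v,(Pw')',-w'(L),F[w,v])$ with domain $$D(A)=\{(w,v,\xi,\psi): w\in H^3(0,L),\ v\in H^2(0,L),\ \xi=v(L),\ \psi=v(0),\ (Pw')'(L)=-w'(L),\ (Pw')'(0)=F[w,v]\}.$$ Set $\alpha_1=\theta_2/(2P(0))$, $\alpha_2=-\theta_2\theta_3/(2\theta_4)$, and for $\gamma>0$ equip $\mathcal H$ with the inner product $$\begin{aligned}\langle z_1,z_2\rangle_{\mathcal H}:={}&\alpha_1\int_0^L\big[\gamma (Pw_1')'(P\bar w_2')'+Pw_1'\bar w_2'\big]\,dx+\alpha_1\gamma P(L)w_1'(L)\bar w_2'(L)+\alpha_2 w_1(0)\bar w_2(0)\\&+\alpha_1\int_0^L\big(\gamma P v_1'\bar v_2'+v_1\bar v_2\big)\,dx+\alpha_1P(L)\xi_1\bar\xi_2+\alpha_2\gamma\psi_1\bar\psi_2\\&+\tfrac12\big(\psi_1-2\alpha_1P(0)w_1'(0)+2\alpha_2w_1(0)\big)\big(\bar\psi_2-2\alpha_1P(0)\bar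 w_2'(0)+2\alpha_2\bar w_2(0)\big).\end{aligned}$$ Then for all sufficiently small $\gamma>0$ the operator $A$ is dissipative with respect to $\langle\cdot,\cdot\rangle_{\mathcal H}$, i.e. $\operatorname{Re}\langle z,Az\rangle_{\mathcal H}\le0$ for all $z\in D(A)$.
   Context: Prime denotes $d/dx$; functions are complex-valued and a bar denotes complex conjugation. *)

theory Defs
  imports "HOL-Analysis.Analysis"
begin

definition sq_integrable_on :: "(real \<Rightarrow> 'a::euclidean_space) \<Rightarrow> real \<Rightarrow> bool" where
  "sq_integrable_on g L \<longleftrightarrow>
     g measurable_on {0..L} \<and> (\<lambda>x. (norm (g x))\<^sup>2) integrable_on {0..L}"

text \<open>H1 L f g: f (a pointwise representative on [0,L]) lies in the Sobolev space H^1(0,L)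
  and g is (a representative of) its weak derivative: g is square integrable and
  f is the indefinite integral of g on [0,L].\<close>
definition H1 :: "real \<Rightarrow> (real \<Rightarrow> 'a::euclidean_space) \<Rightarrow> (real \<Rightarrow> 'a) \<Rightarrow> bool" where
  "H1 L f g \<longleftrightarrow> sq_integrable_on g L \<and>
     (\<forall>x\<in>{0..L}. f x = f 0 + integral {0..x} g)"

definition H2 :: "real \<Rightarrow> (real \<Rightarrow> 'a::euclidean_space) \<Rightarrow> bool" where
  "H2 L f \<longleftrightarrow> (\<exists>f1 f2. H1 L f f1 \<and> H1 L f1 f2)"

definition H3 :: "real \<Rightarrow> (real \<Rightarrow> 'a::euclidean_space) \<Rightarrow> bool" where
  "H3 L f \<longleftrightarrow> (\<exists>f1 f2 f3. H1 L f f1 \<and> H1 L f1 f2 \<and> H1 L f2 f3)"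

text \<open>Data of an element z = (w,v,xi,psi) of the state space needed to evaluate the
  inner product: (w, w', (P w')', v, v', xi, psi).\<close>
type_synonym hdata =
  "(real \<Rightarrow> complex) \<times> (real \<Rightarrow> complex) \<times> (real \<Rightarrow> complex) \<times>
   (real \<Rightarrow> complex) \<times> (real \<Rightarrow> complex) \<times> complex \<times> complex"

definition ipH :: "real \<Rightarrow> (real \<Rightarrow> real) \<Rightarrow> real \<Rightarrow> real \<Rightarrow> real \<Rightarrow> hdata \<Rightarrow> hdata \<Rightarrow> complex" where
  "ipH L P a1 a2 \<gamma> z1 z2 = (case z1 of (w1, dw1, pw1, v1, dv1, \<xi>1, \<psi>1) \<Rightarrow>
     case z2 of (w2, dw2, pw2, v2, dv2, \<xi>2, \<psi>2) \<Rightarrow>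
       of_real a1 * integral {0..L} (\<lambda>x. of_real \<gamma> * pw1 x * cnj (pw2 x)
                                        + of_real (P x) * dw1 x * cnj (dw2 x))
     + of_real (a1 * \<gamma> * P L) * dw1 L * cnj (dw2 L)
     + of_real a2 * w1 0 * cnj (w2 0)
     + of_real a1 * integral {0..L} (\<lambda>x. of_real (\<gamma> * P x) * dv1 x * cnj (dv2 x)
                                        + v1 x * cnj (v2 x))
     + of_real (a1 * P L) * \<xi>1 * cnj \<xi>2
     + of_real (a2 * \<gamma>) * \<psi>1 * cnj \<psi>2
     + (1/2) * (\<psi>1 - of_real (2 * a1 * P 0) * dw1 0 + of_real (2 * a2) * w1 0)
             * cnj (\<psi>2 - of_real (2 * a1 * P 0) * dw2 0 + of_real (2 * a2) * w2 0))"

definition Ffb :: "real \<Rightarrow> real \<Rightarrow> real \<Rightarrow> real \<Rightarrow> complex \<Rightarrow> complex \<Rightarrow> complex \<Rightarrow> complex \<Rightarrow> complex" where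
  "Ffb t1 t2 t3 t4 v0 dv0 w0 dw0 =
     of_real t1 * v0 + of_real t2 * dv0 + of_real t3 * w0 + of_real t4 * dw0"

end

theory Submission
  imports Defs
begin

text \<open>Integrating by parts in both integrals of \<open>Re \<langle>z, A z\<rangle>\<close> leaves only boundary terms.
  By \<open>\<xi> = v(L)\<close> and \<open>(P w')'(L) = -w'(L)\<close> those at \<open>x = L\<close> cancel against the boundary
  summands of the inner product. At \<open>x = 0\<close>, inserting the feedback and the values of
  \<open>\<alpha>\<^sub>1, \<alpha>\<^sub>2\<close> leaves the real quadratic form \<open>Q\<^sub>\<gamma> = dissipation_form a b \<gamma>\<close> evaluated at the real and at the
  imaginary parts of \<open>(v(0), X, Y)\<close>, where \<open>X = \<psi> - 2\<alpha>\<^sub>1P(0)w'(0) + 2\<alpha>\<^sub>2w(0)\<close> and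
  \<open>Y = -2\<alpha>\<^sub>1P(0)v'(0) + 2\<alpha>\<^sub>2v(0)\<close>. The condition \<open>(a + b - 1)\<^sup>2 < 4ab\<close> makes \<open>Q\<^sub>0\<close>
  negative definite in \<open>(v(0), X)\<close>, and this absorbs the \<open>\<gamma>\<close>-perturbation for small \<open>\<gamma>\<close>.\<close>

text \<open>Weak derivatives are only Lebesgue measurable, so Fubini is applied to the completed
  measure.\<close>

lemma sigma_finite_lebesgue: "sigma_finite_measure (lebesgue :: real measure)"
proof
  obtain A :: "real set set" where "countable A" "A \<subseteq> sets lborel" "\<Union>A = space lborel"
      "\<forall>a\<in>A. emeasure lborel a \<noteq> \<infinity>"
    using lborel.sigma_finite_countable by blast
  then show "\<exists>A::real set set. countable A \<and> A \<subseteq> sets lebesgue \<and> \<Union>A = space lebesgue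
      \<and> (\<forall>a\<in>A. emeasure lebesgue a \<noteq> \<infinity>)"
    by (intro exI[of _ A]) auto
qed

interpretation lebesgue_pair: pair_sigma_finite "lebesgue :: real measure" "lebesgue :: real measure"
  by (simp add: pair_sigma_finite.intro sigma_finite_lebesgue)

lemma measurable_ident_lebesgue [measurable]: "(\<lambda>x::real. x) \<in> borel_measurable lebesgue"
  by (rule measurable_completion) simp

lemma integrable_triangle_product_lebesgue:
  fixes f g :: "real \<Rightarrow> complex"
  assumes f: "integrable lebesgue f" and g: "integrable lebesgue g"
  shows "integrable (lebesgue \<Otimes>\<^sub>M lebesgue) (\<lambda>(t, x). if t \<le> x then g t * f x else 0)"
proof (rule Bochner_Integration.integrable_bound)
  have [measurable]: "f \<in> borel_measurable lebesgue" "g \<in> borel_measurable lebesgue"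
    using f g by auto
  have [measurable]: "Measurable.pred (lebesgue \<Otimes>\<^sub>M lebesgue) (\<lambda>p::real \<times> real. fst p \<le> snd p)"
    by measurable
  show "(\<lambda>(t, x). if t \<le> x then g t * f x else 0) \<in> borel_measurable (lebesgue \<Otimes>\<^sub>M lebesgue)"
    by measurable
  show "integrable (lebesgue \<Otimes>\<^sub>M lebesgue) (\<lambda>(t, x). norm (g t) * norm (f x))"
  proof (rule lebesgue_pair.Fubini_integrable)
    show "(\<lambda>(t, x). norm (g t) * norm (f x)) \<in> borel_measurable (lebesgue \<Otimes>\<^sub>M lebesgue)"
      by measurable
    show "integrable lebesgue (\<lambda>t. \<integral>x. norm (case (t, x) of (t, x) \<Rightarrow> norm (g t) * norm (f x)) \<partial>lebesgue)"
      using g by (simp add: abs_mult integrable_norm)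
    show "AE t in lebesgue. integrable lebesgue (\<lambda>x. case (t, x) of (t, x) \<Rightarrow> norm (g t) * norm (f x))"
      using f by (simp add: integrable_norm)
  qed
qed (auto simp: norm_mult)

lemma absolutely_integrable_mult_continuous:
  fixes f F :: "real \<Rightarrow> complex"
  assumes "f absolutely_integrable_on {a..b}" and "continuous_on {a..b} F"
  shows "(\<lambda>x. f x * F x) absolutely_integrable_on {a..b}"
proof -
  have "(\<lambda>x. F x * f x) absolutely_integrable_on {a..b}"
  proof (rule absolutely_integrable_bounded_measurable_product[OF bilinear_times])
    show "F \<in> borel_measurable (lebesgue_on {a..b})"
      using assms(2) by (simp add: continuous_imp_measurable_on_sets_lebesgue)
    show "bounded (F ` {a..b})"
      using assms(2) by (simp add: compact_continuous_image compact_imp_bounded)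
  qed (use assms in auto)
  then show ?thesis by (simp add: mult.commute)
qed

lemma integral_mult_indefinite_integral_swap:
  fixes f g :: "real \<Rightarrow> complex"
  assumes f: "f absolutely_integrable_on {0..L}" and g: "g absolutely_integrable_on {0..L}"
  shows "integral {0..L} (\<lambda>x. f x * integral {0..x} g)
       = integral {0..L} (\<lambda>t. g t * integral {t..L} f)"
proof -
  let ?k = "\<lambda>t x. if t \<le> x then (indicator {0..L} t *\<^sub>R g t) * (indicator {0..L} x *\<^sub>R f x) else 0"
  have k: "integrable (lebesgue \<Otimes>\<^sub>M lebesgue) (\<lambda>(t, x). ?k t x)"
    using f g unfolding set_integrable_def by (rule integrable_triangle_product_lebesgue)
  have inner_t: "(\<integral>t. ?k t x \<partial>lebesgue) = indicator {0..L} x *\<^sub>R (f x * integral {0..x} g)" for x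
  proof (cases "x \<in> {0..L}")
    case True
    then have "(\<integral>t. ?k t x \<partial>lebesgue) = (\<integral>t. (indicator {0..x} t *\<^sub>R g t) * f x \<partial>lebesgue)"
      by (intro Bochner_Integration.integral_cong) (auto simp: indicator_def)
    also have "\<dots> = (LINT t:{0..x}|lebesgue. g t) * f x"
      unfolding set_lebesgue_integral_def by (rule integral_mult_left_zero)
    also have "\<dots> = integral {0..x} g * f x"
      using True by (simp add: set_lebesgue_integral_eq_integral(2) set_integrable_subset[OF g])
    finally show ?thesis
      using True by (simp add: mult.commute)
  next
    case False
    then have "\<And>t. ?k t x = 0" by simp
    then show ?thesis using False by simp
  qed
  have inner_x: "(\<integral>x. ?k t x \<partial>lebesgue) = indicator {0..L} t *\<^sub>R (g t * integral {t..L} f)" for t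
  proof (cases "t \<in> {0..L}")
    case True
    then have "(\<integral>x. ?k t x \<partial>lebesgue) = (\<integral>x. g t * (indicator {t..L} x *\<^sub>R f x) \<partial>lebesgue)"
      by (intro Bochner_Integration.integral_cong) (auto simp: indicator_def)
    also have "\<dots> = g t * (LINT x:{t..L}|lebesgue. f x)"
      unfolding set_lebesgue_integral_def by (rule integral_mult_right_zero)
    also have "\<dots> = g t * integral {t..L} f"
      using True by (simp add: set_lebesgue_integral_eq_integral(2) set_integrable_subset[OF f])
    finally show ?thesis
      using True by simp
  next
    case False
    then have "\<And>x. ?k t x = 0" by simp
    then show ?thesis using False by simp
  qed
  have "(\<lambda>x. f x * integral {0..x} g) absolutely_integrable_on {0..L}"
    using f g by (intro absolutely_integrable_mult_continuous indefinite_integral_continuous_1)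
      (simp_all add: set_lebesgue_integral_eq_integral(1))
  then have "integral {0..L} (\<lambda>x. f x * integral {0..x} g) = (\<integral>x. \<integral>t. ?k t x \<partial>lebesgue \<partial>lebesgue)"
    by (simp add: inner_t set_lebesgue_integral_eq_integral(2)[symmetric] set_lebesgue_integral_def)
  also have "\<dots> = (\<integral>t. \<integral>x. ?k t x \<partial>lebesgue \<partial>lebesgue)"
    using lebesgue_pair.Fubini_integral[OF k] by simp
  also have "\<dots> = integral {0..L} (\<lambda>t. g t * integral {t..L} f)"
  proof -
    have "(\<lambda>t. g t * integral {t..L} f) absolutely_integrable_on {0..L}"
      using f g by (intro absolutely_integrable_mult_continuous indefinite_integral_continuous_1')
        (simp_all add: set_lebesgue_integral_eq_integral(1))
    then show ?thesis
      by (simp add: inner_x set_lebesgue_integral_eq_integral(2)[symmetric] set_lebesgue_integral_def)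
  qed
  finally show ?thesis .
qed

text \<open>Write \<open>g x = g 0 + \<integral>\<^sub>0\<^sup>x g'\<close> and \<open>f x = f L - \<integral>\<^sub>x\<^sup>L f'\<close>; the two double integrals
  this produces coincide by Fubini.\<close>

lemma integration_by_parts_indefinite_integrals:
  fixes f g f' g' :: "real \<Rightarrow> complex"
  assumes L: "0 \<le> L"
    and f': "f' absolutely_integrable_on {0..L}" and g': "g' absolutely_integrable_on {0..L}"
    and f: "\<forall>x\<in>{0..L}. f x = f 0 + integral {0..x} f'"
    and g: "\<forall>x\<in>{0..L}. g x = g 0 + integral {0..x} g'"
  shows "((\<lambda>x. f' x * g x + f x * g' x) has_integral (f L * g L - f 0 * g 0)) {0..L}"
proof -
  have f'_int: "f' integrable_on {0..L}" and g'_int: "g' integrable_on {0..L}"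
    using f' g' by (simp_all add: set_lebesgue_integral_eq_integral(1))
  define J where "J = integral {0..L} (\<lambda>x. f' x * integral {0..x} g')"
  have J_left: "((\<lambda>x. f' x * integral {0..x} g') has_integral J) {0..L}"
    unfolding J_def
    using absolutely_integrable_mult_continuous[OF f' indefinite_integral_continuous_1[OF g'_int]]
    by (simp add: set_lebesgue_integral_eq_integral(1) integrable_integral)
  have J_right: "((\<lambda>t. g' t * integral {t..L} f') has_integral J) {0..L}"
    unfolding J_def integral_mult_indefinite_integral_swap[OF f' g']
    using absolutely_integrable_mult_continuous[OF g' indefinite_integral_continuous_1'[OF f'_int]]
    by (simp add: set_lebesgue_integral_eq_integral(1) integrable_integral)
  have fL: "f L = f 0 + integral {0..L} f'" and gL: "g L = g 0 + integral {0..L} g'"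
    using f[rule_format, of L] g[rule_format, of L] L by simp_all
  have f'_has: "(f' has_integral (f L - f 0)) {0..L}" and g'_has: "(g' has_integral (g L - g 0)) {0..L}"
    using f'_int g'_int by (simp_all add: fL gL integrable_integral)
  have f_tail: "integral {t..L} f' = f L - f t" if "t \<in> {0..L}" for t
  proof -
    have "integral {0..t} f' + integral {t..L} f' = integral {0..L} f'"
      using that f'_int by (intro Henstock_Kurzweil_Integration.integral_combine) auto
    then show ?thesis using f[rule_format, OF that] fL by (simp add: algebra_simps)
  qed
  have "((\<lambda>x. (f' x * g 0 + f' x * integral {0..x} g') + (g' x * f L - g' x * integral {x..L} f'))
      has_integral ((f L - f 0) * g 0 + J + ((g L - g 0) * f L - J))) {0..L}"
    by (intro has_integral_add has_integral_diff has_integral_mult_left has_integral_mult_right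
        J_left J_right f'_has g'_has)
  also have "(f L - f 0) * g 0 + J + ((g L - g 0) * f L - J) = f L * g L - f 0 * g 0"
    by (simp add: algebra_simps)
  finally show ?thesis
  proof (rule has_integral_eq[rotated])
    fix x assume x: "x \<in> {0..L}"
    show "(f' x * g 0 + f' x * integral {0..x} g') + (g' x * f L - g' x * integral {x..L} f')
        = f' x * g x + f x * g' x"
      unfolding g[rule_format, OF x] f_tail[OF x] by (simp add: algebra_simps)
  qed
qed

lemma sq_integrable_on_imp_absolutely_integrable:
  fixes g :: "real \<Rightarrow> 'a::euclidean_space"
  assumes "sq_integrable_on g L"
  shows "g absolutely_integrable_on {0..L}"
proof (rule measurable_bounded_by_integrable_imp_absolutely_integrable[where g="\<lambda>x. 1 + (norm (g x))\<^sup>2"])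
  show "g \<in> borel_measurable (lebesgue_on {0..L})"
    using assms measurable_on_iff_borel_measurable[of "{0..L}" g] unfolding sq_integrable_on_def by simp
  show "(\<lambda>x. 1 + (norm (g x))\<^sup>2) integrable_on {0..L}"
    using assms unfolding sq_integrable_on_def by (intro integrable_add integrable_on_const) auto
  show "norm (g x) \<le> 1 + (norm (g x))\<^sup>2" for x
    using sum_power2_ge_zero[of "norm (g x) - 1/2" 0] by (simp add: power2_eq_square field_simps)
qed simp

lemma H1_absolutely_integrable: "H1 L f f' \<Longrightarrow> f' absolutely_integrable_on {0..L}"
  unfolding H1_def by (blast intro: sq_integrable_on_imp_absolutely_integrable)

lemma H1_continuous_on:
  assumes "H1 L f f'"
  shows "continuous_on {0..L} f"
proof -
  have "continuous_on {0..L} (\<lambda>x. f 0 + integral {0..x} f')"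
    using H1_absolutely_integrable[OF assms]
    by (intro continuous_intros indefinite_integral_continuous_1)
      (simp add: set_lebesgue_integral_eq_integral(1))
  then show ?thesis
    using assms unfolding H1_def by (metis (no_types, lifting) continuous_on_eq)
qed

lemma H1_integration_by_parts_cnj:
  fixes f g f' g' :: "real \<Rightarrow> complex"
  assumes "0 \<le> L" and f: "H1 L f f'" and g: "H1 L g g'"
  shows "((\<lambda>x. f' x * cnj (g x) + f x * cnj (g' x)) has_integral (f L * cnj (g L) - f 0 * cnj (g 0))) {0..L}"
proof (rule integration_by_parts_indefinite_integrals)
  show "f' absolutely_integrable_on {0..L}" "\<forall>x\<in>{0..L}. f x = f 0 + integral {0..x} f'"
    using f H1_absolutely_integrable[OF f] unfolding H1_def by blast+
  show "(\<lambda>x. cnj (g' x)) absolutely_integrable_on {0..L}"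
    using H1_absolutely_integrable[OF g] unfolding absolutely_integrable_on_def
    by (simp add: integrable_on_cnj_iff)
  show "\<forall>x\<in>{0..L}. cnj (g x) = cnj (g 0) + integral {0..x} (\<lambda>x. cnj (g' x))"
    using g unfolding H1_def by (metis integral_cnj complex_cnj_add)
qed fact

lemma H1_mult_cnj_integrable:
  fixes f f' g :: "real \<Rightarrow> complex"
  assumes "H1 L f f'" and "g absolutely_integrable_on {0..L}"
  shows "(\<lambda>x. f x * cnj (g x)) integrable_on {0..L}"
proof -
  have "(\<lambda>x. cnj (g x)) absolutely_integrable_on {0..L}"
    using assms(2) unfolding absolutely_integrable_on_def by (simp add: integrable_on_cnj_iff)
  then have "(\<lambda>x. cnj (g x) * f x) absolutely_integrable_on {0..L}"
    by (rule absolutely_integrable_mult_continuous[OF _ H1_continuous_on[OF assms(1)]])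
  then show ?thesis
    by (simp add: set_lebesgue_integral_eq_integral(1) mult.commute)
qed

lemma Re_interior_integrals_eq_boundary:
  fixes w1 v v1 q1 q2 p1 :: "real \<Rightarrow> complex" and P :: "real \<Rightarrow> real"
  assumes L: "0 \<le> L" and v: "H1 L v v1" and Pw: "H1 L (\<lambda>x. of_real (P x) * w1 x) q1"
    and q: "H1 L q1 q2" and Pv: "H1 L (\<lambda>x. of_real (P x) * v1 x) p1"
  shows "Re (integral {0..L} (\<lambda>x. of_real \<gamma> * q1 x * cnj (p1 x) + of_real (P x) * w1 x * cnj (v1 x)))
       + Re (integral {0..L} (\<lambda>x. of_real (\<gamma> * P x) * v1 x * cnj (q2 x) + v x * cnj (q1 x)))
       = \<gamma> * Re (q1 L * cnj (of_real (P L) * v1 L) - q1 0 * cnj (of_real (P 0) * v1 0))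
         + Re (v L * cnj (of_real (P L) * w1 L) - v 0 * cnj (of_real (P 0) * w1 0))"
    (is "Re (integral _ ?I1) + Re (integral _ ?I2) = ?B")
proof -
  have "?I1 integrable_on {0..L}"
    using integrable_on_cmult_left[OF H1_mult_cnj_integrable[OF q H1_absolutely_integrable[OF Pv]], of \<gamma>]
      H1_mult_cnj_integrable[OF Pw H1_absolutely_integrable[OF v]]
    by (auto simp: mult.assoc intro: integrable_add)
  moreover have "?I2 integrable_on {0..L}"
    using integrable_on_cmult_left[OF H1_mult_cnj_integrable[OF Pv H1_absolutely_integrable[OF q]], of \<gamma>]
      H1_mult_cnj_integrable[OF v H1_absolutely_integrable[OF Pw]]
    by (auto simp: mult.assoc mult.left_commute intro: integrable_add)
  ultimately have "((\<lambda>x. Re (?I1 x) + Re (?I2 x)) has_integral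
      (Re (integral {0..L} ?I1) + Re (integral {0..L} ?I2))) {0..L}"
    by (intro has_integral_add has_integral_Re integrable_integral)
  moreover have "((\<lambda>x. Re (?I1 x) + Re (?I2 x)) has_integral ?B) {0..L}"
  proof -
    have "((\<lambda>x. \<gamma> * Re (q2 x * cnj (of_real (P x) * v1 x) + q1 x * cnj (p1 x))
        + Re (v1 x * cnj (of_real (P x) * w1 x) + v x * cnj (q1 x))) has_integral ?B) {0..L}"
      by (intro has_integral_add has_integral_mult_right has_integral_Re
          H1_integration_by_parts_cnj[OF L q Pv] H1_integration_by_parts_cnj[OF L v Pw])
    \<comment> \<open>the integrands agree only in their real parts, e.g. \<open>Re (P v' cnj q2) = Re (q2 cnj (P v'))\<close>\<close>
    then show ?thesis
      by (rule has_integral_eq[rotated]) (simp add: algebra_simps)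
  qed
  ultimately show ?thesis
    by (rule has_integral_unique)
qed

text \<open>The arguments are \<open>\<alpha>\<^sub>1, \<alpha>\<^sub>2, \<gamma>, P(0), v(0), v'(0), w(0), w'(0)\<close> and the feedback
  value \<open>F\<close>; there are no terms at \<open>x = L\<close> because they cancel.\<close>

definition boundary_form ::
    "real \<Rightarrow> real \<Rightarrow> real \<Rightarrow> real \<Rightarrow> complex \<Rightarrow> complex \<Rightarrow> complex \<Rightarrow> complex \<Rightarrow> complex \<Rightarrow> real" where
  "boundary_form a1 a2 \<gamma> P0 v0 dv0 w0 dw0 F =
     Re (of_real a2 * w0 * cnj v0 + of_real (a2 * \<gamma>) * v0 * cnj F
         - of_real (a1 * P0) * (of_real \<gamma> * F * cnj dv0 + v0 * cnj dw0)
         + (1/2) * (v0 - of_real (2 * a1 * P0) * dw0 + of_real (2 * a2) * w0)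
           * cnj (F - of_real (2 * a1 * P0) * dv0 + of_real (2 * a2) * v0))"

lemma Re_ipH_Az_eq_boundary_form:
  fixes w w1 v v1 q1 q2 p1 :: "real \<Rightarrow> complex" and P :: "real \<Rightarrow> real"
  assumes L: "0 \<le> L" and v: "H1 L v v1" and Pw: "H1 L (\<lambda>x. of_real (P x) * w1 x) q1"
    and q: "H1 L q1 q2" and Pv: "H1 L (\<lambda>x. of_real (P x) * v1 x) p1"
    and qL: "q1 L = - w1 L" and q0: "q1 0 = F"
  shows "Re (ipH L P a1 a2 \<gamma> (w, w1, q1, v, v1, v L, v 0) (v, v1, p1, q1, q2, - w1 L, F))
       = boundary_form a1 a2 \<gamma> (P 0) (v 0) (v1 0) (w 0) (w1 0) F"
proof -
  define J1 where "J1 = integral {0..L} (\<lambda>x. of_real \<gamma> * q1 x * cnj (p1 x) + of_real (P x) * w1 x * cnj (v1 x))"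
  define J2 where "J2 = integral {0..L} (\<lambda>x. of_real (\<gamma> * P x) * v1 x * cnj (q2 x) + v x * cnj (q1 x))"
  define B where "B = \<gamma> * Re (- w1 L * cnj (of_real (P L) * v1 L) - F * cnj (of_real (P 0) * v1 0))
      + Re (v L * cnj (of_real (P L) * w1 L) - v 0 * cnj (of_real (P 0) * w1 0))"
  have interior: "Re J1 + Re J2 = B"
    using Re_interior_integrals_eq_boundary[OF L v Pw q Pv, of \<gamma>]
    unfolding J1_def J2_def B_def qL q0 .
  have "Re (ipH L P a1 a2 \<gamma> (w, w1, q1, v, v1, v L, v 0) (v, v1, p1, q1, q2, - w1 L, F))
      - boundary_form a1 a2 \<gamma> (P 0) (v 0) (v1 0) (w 0) (w1 0) F = a1 * (Re J1 + Re J2 - B)"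
    unfolding ipH_def prod.case unfolding J1_def[symmetric] J2_def[symmetric] boundary_form_def B_def
    by (simp add: algebra_simps)
  then show ?thesis
    using interior by simp
qed

definition dissipation_form :: "real \<Rightarrow> real \<Rightarrow> real \<Rightarrow> real \<Rightarrow> real \<Rightarrow> real \<Rightarrow> real" where
  "dissipation_form a b \<gamma> v x y =
     - v\<^sup>2 / 2 + (b - a + 1) / 2 * x * v - b / 2 * x\<^sup>2 + \<gamma> / 2 * (((b - a) * v - b * x) * y - y\<^sup>2)"

lemma quadratic_form_nonneg:
  fixes d1 d2 e u x :: real
  assumes "d1 > 0" and "e\<^sup>2 \<le> 4 * d1 * d2"
  shows "d1 * u\<^sup>2 - e * u * x + d2 * x\<^sup>2 \<ge> 0"
proof -
  have "4 * d1 * (d1 * u\<^sup>2 - e * u * x + d2 * x\<^sup>2) = (2 * d1 * u - e * x)\<^sup>2 + (4 * d1 * d2 - e\<^sup>2) * x\<^sup>2"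
    by (simp add: algebra_simps power2_eq_square)
  also have "\<dots> \<ge> 0"
    using assms by simp
  finally show ?thesis
    using assms(1) by (simp add: zero_le_mult_iff)
qed

text \<open>\<open>(a + b - 1)\<^sup>2 < 4ab\<close> is equivalent to \<open>((b - a + 1)/2)\<^sup>2 < b\<close>, the negative
  definiteness of \<open>dissipation_form a b 0\<close> in \<open>(v, x)\<close>.\<close>

lemma dissipation_form_nonpos:
  fixes a b :: real
  assumes "a > 0" and "b > 0" and "(a + b - 1)\<^sup>2 < 4 * a * b"
  shows "\<exists>\<gamma>0>0. \<forall>\<gamma>. 0 < \<gamma> \<and> \<gamma> < \<gamma>0 \<longrightarrow> (\<forall>v x y. dissipation_form a b \<gamma> v x y \<le> 0)"
proof -
  define B where "B = (b - a + 1) / 2"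
  have B: "B\<^sup>2 < b"
    using assms(3) unfolding B_def by (simp add: power2_eq_square algebra_simps)
  define c where "c = (b - B\<^sup>2) / (2 * (1 + b))"
  have c_pos: "c > 0"
    using B assms by (simp add: c_def)
  have c_half: "c < 1/2"
    using assms unfolding c_def by (simp add: divide_simps) (smt (verit) zero_le_power2[of B])
  have c_disc: "B\<^sup>2 \<le> 4 * (1/2 - c) * (b/2 - c)"
  proof -
    have "c * (2 * (1 + b)) = b - B\<^sup>2"
      unfolding c_def using assms by (simp add: field_simps)
    then show ?thesis
      using zero_le_power2[of c] by (simp add: algebra_simps power2_eq_square)
  qed
  define M where "M = (b - a)\<^sup>2 + b\<^sup>2 + 1"
  have M_pos: "M > 0"
    unfolding M_def by (simp add: add_nonneg_pos)
  show ?thesis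
  proof (intro exI[of _ "4 * c / M"] conjI allI impI)
    show "4 * c / M > 0"
      using c_pos M_pos by simp
    fix \<gamma> v x y :: real
    assume \<gamma>: "0 < \<gamma> \<and> \<gamma> < 4 * c / M"
    have "(1/2 - c) * v\<^sup>2 - B * v * x + (b/2 - c) * x\<^sup>2 \<ge> 0"
      using c_half c_disc by (intro quadratic_form_nonneg) auto
    then have vx: "- v\<^sup>2 / 2 + B * x * v - b / 2 * x\<^sup>2 \<le> - c * (v\<^sup>2 + x\<^sup>2)"
      by (simp add: algebra_simps)
    have "((b - a) * v - b * x) * y - y\<^sup>2 \<le> ((b - a)\<^sup>2 * v\<^sup>2 + b\<^sup>2 * x\<^sup>2) / 2"
      using sum_power2_ge_zero[of "y - (b - a) * v" "y + b * x"]
      by (simp add: power2_eq_square algebra_simps)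
    also have "\<dots> \<le> M * (v\<^sup>2 + x\<^sup>2) / 2"
      unfolding M_def by (simp add: algebra_simps)
    finally have "\<gamma> / 2 * (((b - a) * v - b * x) * y - y\<^sup>2) \<le> (\<gamma> * M) * (v\<^sup>2 + x\<^sup>2) / 4"
      using \<gamma> by (simp add: mult_left_mono)
    also have "\<dots> \<le> c * (v\<^sup>2 + x\<^sup>2)"
    proof -
      have "\<gamma> * M \<le> 4 * c"
        using \<gamma> M_pos by (simp add: field_simps)
      then show ?thesis
        using mult_right_mono[of "\<gamma> * M" "4 * c" "v\<^sup>2 + x\<^sup>2"] by simp
    qed
    finally show "dissipation_form a b \<gamma> v x y \<le> 0"
      using vx unfolding dissipation_form_def B_def by simp
  qed
qed

lemma boundary_form_feedback_nonpos:
  fixes v0 dv0 w0 dw0 :: complex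
  assumes form: "\<forall>v x y. dissipation_form a b \<gamma> v x y \<le> 0"
    and "\<theta>1 = - 2 * a2 - a" and "\<theta>2 = 2 * a1 * P0" and "\<theta>3 = - 2 * b * a2" and "\<theta>4 = 2 * b * a1 * P0"
  shows "boundary_form a1 a2 \<gamma> P0 v0 dv0 w0 dw0 (Ffb \<theta>1 \<theta>2 \<theta>3 \<theta>4 v0 dv0 w0 dw0) \<le> 0"
proof -
  define X where "X = v0 - of_real (2 * a1 * P0) * dw0 + of_real (2 * a2) * w0"
  define Y where "Y = - of_real (2 * a1 * P0) * dv0 + of_real (2 * a2) * v0"
  \<comment> \<open>the feedback law reads \<open>F = (b - a) v0 - b X - Y\<close>\<close>
  have "boundary_form a1 a2 \<gamma> P0 v0 dv0 w0 dw0 (Ffb \<theta>1 \<theta>2 \<theta>3 \<theta>4 v0 dv0 w0 dw0)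
      = dissipation_form a b \<gamma> (Re v0) (Re X) (Re Y) + dissipation_form a b \<gamma> (Im v0) (Im X) (Im Y)"
    unfolding boundary_form_def dissipation_form_def Ffb_def X_def Y_def assms(2-5)
    by (simp add: field_simps power2_eq_square)
  then show ?thesis
    using form by (simp add: add_nonpos_nonpos)
qed

theorem lemma2p9:
  fixes L P0 a b \<theta>1 \<theta>2 \<theta>3 \<theta>4 :: real and P :: "real \<Rightarrow> real"
  assumes "L > 0"
    and "H2 L P"
    and "P0 > 0" and "\<forall>x\<in>{0..L}. P x \<ge> P0"
    and "a > 0" and "b > 0" and "(a + b - 1)\<^sup>2 < 4 * a * b"
    and "\<theta>1 = \<theta>3 / b - a" and "\<theta>2 = \<theta>4 / b"
    and "\<theta>1 < 0" and "\<theta>3 < 0" and "\<theta>2 > 0" and "\<theta>4 > 0"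
  shows "\<exists>\<gamma>0>0. \<forall>\<gamma>. 0 < \<gamma> \<and> \<gamma> < \<gamma>0 \<longrightarrow>
    (\<forall>(w :: real \<Rightarrow> complex) (v :: real \<Rightarrow> complex) \<xi> \<psi> w1 v1 q1 q2 p1.
       H3 L w \<longrightarrow> H2 L v \<longrightarrow>
       H1 L w w1 \<longrightarrow> H1 L v v1 \<longrightarrow>
       H1 L (\<lambda>x. of_real (P x) * w1 x) q1 \<longrightarrow> H1 L q1 q2 \<longrightarrow>
       H1 L (\<lambda>x. of_real (P x) * v1 x) p1 \<longrightarrow>
       \<xi> = v L \<longrightarrow> \<psi> = v 0 \<longrightarrow>
       q1 L = - w1 L \<longrightarrow>
       q1 0 = Ffb \<theta>1 \<theta>2 \<theta>3 \<theta>4 (v 0) (v1 0) (w 0) (w1 0) \<longrightarrow>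
       Re (ipH L P (\<theta>2 / (2 * P 0)) (- \<theta>2 * \<theta>3 / (2 * \<theta>4)) \<gamma>
             (w, w1, q1, v, v1, \<xi>, \<psi>)
             (v, v1, p1, q1, q2, - w1 L, Ffb \<theta>1 \<theta>2 \<theta>3 \<theta>4 (v 0) (v1 0) (w 0) (w1 0)))
         \<le> 0)"
proof -
  obtain \<gamma>0 where "\<gamma>0 > 0"
    and form: "\<forall>\<gamma>. 0 < \<gamma> \<and> \<gamma> < \<gamma>0 \<longrightarrow> (\<forall>v x y. dissipation_form a b \<gamma> v x y \<le> 0)"
    using dissipation_form_nonpos[OF assms(5-7)] by blast
  define a1 where "a1 = \<theta>2 / (2 * P 0)"
  define a2 where "a2 = - \<theta>2 * \<theta>3 / (2 * \<theta>4)"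
  have "P 0 > 0"
    using assms(1,3,4) by force
  have \<theta>3: "\<theta>3 = b * (\<theta>1 + a)" and \<theta>4: "\<theta>4 = b * \<theta>2"
    using assms(6,8,9) by (simp_all add: field_simps)
  have feedback: "\<theta>1 = - 2 * a2 - a" "\<theta>2 = 2 * a1 * P 0" "\<theta>3 = - 2 * b * a2" "\<theta>4 = 2 * b * a1 * P 0"
    unfolding a1_def a2_def \<theta>3 \<theta>4 using \<open>P 0 > 0\<close> assms(6,12) by (simp_all add: field_simps)
  show ?thesis
    unfolding a1_def[symmetric] a2_def[symmetric]
  proof (intro exI[of _ \<gamma>0] conjI allI impI \<open>\<gamma>0 > 0\<close>)
    fix \<gamma> :: real and w v :: "real \<Rightarrow> complex" and \<xi> \<psi> :: complex and w1 v1 q1 q2 p1 :: "real \<Rightarrow> complex"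
    assume "0 < \<gamma> \<and> \<gamma> < \<gamma>0" and "H3 L w" "H2 L v" "H1 L w w1" and v: "H1 L v v1"
      and Pw: "H1 L (\<lambda>x. of_real (P x) * w1 x) q1" and q: "H1 L q1 q2"
      and Pv: "H1 L (\<lambda>x. of_real (P x) * v1 x) p1"
      and "\<xi> = v L" "\<psi> = v 0" "q1 L = - w1 L" "q1 0 = Ffb \<theta>1 \<theta>2 \<theta>3 \<theta>4 (v 0) (v1 0) (w 0) (w1 0)"
    then show "Re (ipH L P a1 a2 \<gamma> (w, w1, q1, v, v1, \<xi>, \<psi>)
        (v, v1, p1, q1, q2, - w1 L, Ffb \<theta>1 \<theta>2 \<theta>3 \<theta>4 (v 0) (v1 0) (w 0) (w1 0))) \<le> 0"
      using Re_ipH_Az_eq_boundary_form[OF _ v Pw q Pv] assms(1) form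
        boundary_form_feedback_nonpos[OF _ feedback] by simp
  qed
qed

end
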